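(* Let $q=p^{m_0}$ with $p$ prime, let $L$ be a finite extension of $\mathbb{F}_q((1/\theta))$ with ring of integers $\mathcal O$, and let $\rho$ be a permutation of $\{0,1,2,\ldots\}$. Let $f:\mathbb{Z}_p\to\mathcal O$ be continuous with Mahler expansion $f(y)=\sum_{j\ge0}c_j\binom{y}{j}$ (where $c_j\in\mathcal O$, $c_j\to0$). Then $$f^{\rho_1}(y)=\sum_{j\ge0}c_j\binom{y}{\rho_\ast j}.$$
   Context: For $y\in\mathbb{Z}_p$ written $q$-adically as $y=\sum_{j\ge0}c_jq^j$ with $0\le c_j<q$, set $\rho_\ast y:=\sum_{j\ge0}c_jq^{\rho(j)}$; this is a homeomorphism of $\mathbb{Z}_p$ stabilizing the nonnegative integers. Binomial coefficients $\binom{y}{j}$ are viewed as functions $\mathbb{Z}_p\to\mathcal O$ via reduction modulo $p$; every continuous $f:\mathbb{Z}_p\to\mathcal O$ has a unique such (Mahler) expansion with coefficients tending to $0$. Define $f^{\rho_1}(y):=f(\rho_\ast^{-1}y)$. *)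

theory Defs
  imports "HOL-Analysis.Analysis" "HOL-Computational_Algebra.Formal_Power_Series"
begin

text \<open>p-adic integers Z_p, represented through their q-adic digit sequences
  (q = p^m0); every y in Z_p has a unique expansion y = sum_j c_j q^j, 0 <= c_j < q.\<close>
definition Zp :: "nat \<Rightarrow> (nat \<Rightarrow> nat) set" where
  "Zp q = {y. \<forall>i. y i < q}"

definition trunc_q :: "nat \<Rightarrow> (nat \<Rightarrow> nat) \<Rightarrow> nat \<Rightarrow> nat" where
  "trunc_q q y N = (\<Sum>i<N. y i * q ^ i)"

definition nat_to_Zp :: "nat \<Rightarrow> nat \<Rightarrow> (nat \<Rightarrow> nat)" where
  "nat_to_Zp q n = (\<lambda>i. (n div q ^ i) mod q)"

text \<open>Binomial coefficient binom(y,j) on Z_p reduced mod p: the (p-adically continuous)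
  extension of n |-> (n choose j) mod p, i.e. the eventual value of
  (y mod q^N choose j) mod p as N -> infinity.\<close>
definition binom_Zp :: "nat \<Rightarrow> nat \<Rightarrow> (nat \<Rightarrow> nat) \<Rightarrow> nat \<Rightarrow> nat" where
  "binom_Zp p q y j = (THE r. \<forall>\<^sub>F N in sequentially. (trunc_q q y N choose j) mod p = r)"

text \<open>rho_* on Z_p: sum c_j q^j |-> sum c_j q^(rho j), i.e. the digit at position rho j is c_j.\<close>
definition rho_star :: "(nat \<Rightarrow> nat) \<Rightarrow> (nat \<Rightarrow> nat) \<Rightarrow> (nat \<Rightarrow> nat)" where
  "rho_star \<rho> y = y \<circ> inv \<rho>"

text \<open>rho_* restricted to nonnegative integers (the digits of n vanish beyond position n).\<close>
definition rho_star_nat :: "nat \<Rightarrow> (nat \<Rightarrow> nat) \<Rightarrow> nat \<Rightarrow> nat" where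
  "rho_star_nat q \<rho> n = (\<Sum>i\<le>n. ((n div q ^ i) mod q) * q ^ (\<rho> i))"

definition Zp_continuous :: "nat \<Rightarrow> ((nat \<Rightarrow> nat) \<Rightarrow> 'a::metric_space) \<Rightarrow> bool" where
  "Zp_continuous q f = (\<forall>y\<in>Zp q. \<forall>e>0. \<exists>N. \<forall>z\<in>Zp q.
      (\<forall>i<N. z i = y i) \<longrightarrow> dist (f z) (f y) < e)"

end

theory Submission
  imports Defs "HOL-Computational_Algebra.Primes" "HOL-Number_Theory.Cong"
begin

text \<open>By Lucas' theorem, in characteristic \<open>p\<close> the binomial coefficient \<open>binom(y, j)\<close> is the
  product over the \<open>q\<close>-adic digit positions \<open>i\<close> of \<open>binom(y\<^sub>i, j\<^sub>i)\<close>, a formula that only sees how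
  the digits of \<open>y\<close> and \<open>j\<close> are paired. Applying \<open>\<rho>\<^sub>*\<close> to \<open>j\<close> and \<open>\<rho>\<^sub>*\<^sup>-\<^sup>1\<close> to \<open>y\<close> moves both
  digit sequences by the same permutation, so \<open>binom(y, \<rho>\<^sub>* j) = binom(\<rho>\<^sub>*\<^sup>-\<^sup>1 y, j)\<close>, and the
  corollary is the Mahler expansion of \<open>f\<close> evaluated at \<open>\<rho>\<^sub>*\<^sup>-\<^sup>1 y\<close>.\<close>

lemma coeff_pCons_1_1_power:
  "coeff ([:1, 1:] ^ n :: 'a::comm_semiring_1 poly) i = of_nat (n choose i)"
proof (cases "i \<le> n")
  case True
  then show ?thesis by (simp add: coeff_linear_poly_power)
next
  case False
  have "degree ([:1, 1:] ^ n :: 'a poly) \<le> n"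
    using degree_power_le[of "[:1, 1:] :: 'a poly" n] by simp
  then show ?thesis using False by (simp add: coeff_eq_0 binomial_eq_0)
qed

lemma coeff_monom_mult_digits:
  fixes P :: "'a::comm_semiring_1 poly"
  assumes "degree P < q" and "c < q"
  shows "coeff (monom b (q * k) * P) (c + q * d) = (if k = d then b * coeff P c else 0)"
proof (cases k d rule: linorder_cases)
  case less
  then obtain t where "d = Suc (k + t)" using less_imp_Suc_add by blast
  then have "c + q * d - q * k = c + q * Suc t" by (simp add: algebra_simps)
  then have "degree P < c + q * d - q * k" using assms(1) by (simp add: trans_less_add2)
  then show ?thesis using less by (simp add: coeff_monom_mult coeff_eq_0)
next
  case greater
  then have "q * d + q \<le> q * k"
    by (metis mult_Suc_right mult_le_mono2 Suc_leI add.commute)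
  then show ?thesis using greater assms(2) by (simp add: coeff_monom_mult)
qed (simp add: coeff_monom_mult)

lemma of_nat_choose_lucas_step:
  fixes a b c d q :: nat
  assumes "prime CHAR('a::comm_ring_1)" and "q = CHAR('a) ^ m"
    and "a < q" and "c < q"
  shows "(of_nat ((a + q * b) choose (c + q * d)) :: 'a) = of_nat (a choose c) * of_nat (b choose d)"
proof -
  define P :: "'a poly" where "P = [:1, 1:] ^ a"
  have "([:1, 1:] :: 'a poly) ^ q = (monom 1 1 + 1) ^ q"
    by (simp add: monom_altdef one_pCons)
  also have "\<dots> = monom 1 q + 1"
    using freshmans_dream'[where x="monom 1 1 :: 'a poly" and y=1 and n=m] assms(1,2)
    by (simp add: monom_power)
  finally have frobenius: "([:1, 1:] :: 'a poly) ^ q = monom 1 q + 1" .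
  have "([:1, 1:] :: 'a poly) ^ (a + q * b) = (monom 1 q + 1) ^ b * P"
    unfolding power_add power_mult frobenius P_def by (simp add: mult.commute)
  also have "\<dots> = (\<Sum>k\<le>b. monom (of_nat (b choose k)) (q * k) * P)"
    unfolding binomial_ring sum_distrib_right
    by (intro sum.cong refl) (simp add: monom_power of_nat_poly smult_monom)
  finally have expand: "([:1, 1:] :: 'a poly) ^ (a + q * b) = \<dots>" .
  have "degree P < q"
    using degree_power_le[of "[:1, 1:] :: 'a poly" a] assms(3) by (simp add: P_def)
  then have "(of_nat ((a + q * b) choose (c + q * d)) :: 'a)
      = (\<Sum>k\<le>b. if k = d then of_nat (b choose k) * coeff P c else 0)"
    by (simp add: coeff_pCons_1_1_power[symmetric] expand coeff_sum coeff_monom_mult_digits assms(4))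
  also have "\<dots> = of_nat (a choose c) * of_nat (b choose d)"
    by (cases "d \<le> b") (auto simp: binomial_eq_0 P_def coeff_pCons_1_1_power mult.commute)
  finally show ?thesis .
qed

lemma trunc_q_Suc: "trunc_q q y (Suc N) = y 0 + q * trunc_q q (y \<circ> Suc) N"
  unfolding trunc_q_def sum.lessThan_Suc_shift by (simp add: sum_distrib_left mult_ac)

lemma of_nat_choose_trunc_q:
  assumes "prime CHAR('a::comm_ring_1)" and "q = CHAR('a) ^ m" and "\<forall>i. y i < q"
  shows "(of_nat (trunc_q q y N choose j) :: 'a) =
    (\<Prod>i<N. of_nat (y i choose nat_to_Zp q j i)) * of_nat (0 choose (j div q ^ N))"
  using assms(3)
proof (induction N arbitrary: y j)
  case 0
  then show ?case by (simp add: trunc_q_def)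
next
  case (Suc N)
  have "q > 0" using assms(1,2) by (simp add: prime_gt_0_nat)
  then have "(of_nat (trunc_q q y (Suc N) choose j) :: 'a)
      = of_nat (y 0 choose j mod q) * of_nat (trunc_q q (y \<circ> Suc) N choose (j div q))"
    using of_nat_choose_lucas_step[OF assms(1,2), of "y 0" "j mod q" "trunc_q q (y \<circ> Suc) N" "j div q"]
      Suc.prems
    by (simp add: trunc_q_Suc)
  also have "(of_nat (trunc_q q (y \<circ> Suc) N choose (j div q)) :: 'a)
      = (\<Prod>i<N. of_nat ((y \<circ> Suc) i choose nat_to_Zp q (j div q) i))
        * of_nat (0 choose (j div q div q ^ N))"
    by (rule Suc.IH) (use Suc.prems in simp)
  moreover have "j div q div q ^ i = j div q ^ Suc i" for i
    by (simp add: div_mult2_eq)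
  ultimately show ?case
    unfolding prod.lessThan_Suc_shift by (simp add: nat_to_Zp_def mult_ac)
qed

lemma div_power_eq_0:
  fixes q n i :: nat
  assumes "q \<ge> 2" and "n \<le> i"
  shows "n div q ^ i = 0"
proof -
  have "n < 2 ^ n" by (rule less_exp)
  also have "\<dots> \<le> 2 ^ i" using assms by (intro power_increasing) auto
  also have "\<dots> \<le> q ^ i" using assms by (intro power_mono) auto
  finally show ?thesis by simp
qed

lemma nat_to_Zp_support_subset:
  assumes "q \<ge> 2"
  shows "{i. nat_to_Zp q n i \<noteq> 0} \<subseteq> {..<n}"
proof
  fix i assume "i \<in> {i. nat_to_Zp q n i \<noteq> 0}"
  then show "i \<in> {..<n}"
    using div_power_eq_0[OF assms, of n i] by (cases "n \<le> i") (auto simp: nat_to_Zp_def)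
qed

lemma binom_Zp_eqI:
  assumes "\<forall>\<^sub>F N in sequentially. (trunc_q q y N choose j) mod p = r"
  shows "binom_Zp p q y j = r"
  unfolding binom_Zp_def
proof (rule the_equality)
  show "\<forall>\<^sub>F N in sequentially. (trunc_q q y N choose j) mod p = r" by (fact assms)
next
  fix r' assume "\<forall>\<^sub>F N in sequentially. (trunc_q q y N choose j) mod p = r'"
  with assms have "\<forall>\<^sub>F N in sequentially. r' = r" by eventually_elim simp
  then show "r' = r" by simp
qed

lemma of_nat_binom_Zp:
  assumes "prime CHAR('a::comm_ring_1)" and "q = CHAR('a) ^ m" and "m \<ge> 1"
    and "y \<in> Zp q"
  shows "(of_nat (binom_Zp CHAR('a) q y j) :: 'a) =
    (\<Prod>i\<in>{i. nat_to_Zp q j i \<noteq> 0}. of_nat (y i choose nat_to_Zp q j i))"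
    (is "_ = ?lucas")
proof -
  have "q \<ge> 2"
    using assms(1-3) prime_ge_2_nat[of "CHAR('a)"] self_le_power[of "CHAR('a)" m] by simp
  have stable: "(of_nat (trunc_q q y N choose j) :: 'a) = ?lucas" if "N \<ge> j" for N
  proof -
    have "(of_nat (trunc_q q y N choose j) :: 'a) = (\<Prod>i<N. of_nat (y i choose nat_to_Zp q j i))"
      using of_nat_choose_trunc_q[OF assms(1,2), of y N j] assms(4)
        div_power_eq_0[OF \<open>q \<ge> 2\<close> that] by (simp add: Zp_def)
    also have "\<dots> = ?lucas"
      using nat_to_Zp_support_subset[OF \<open>q \<ge> 2\<close>, of j] that
      by (intro prod.mono_neutral_right) auto
    finally show ?thesis .
  qed
  have "binom_Zp CHAR('a) q y j = (trunc_q q y j choose j) mod CHAR('a)"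
  proof (rule binom_Zp_eqI, unfold eventually_sequentially, intro exI[of _ j] allI impI)
    fix N assume "N \<ge> j"
    then have "(of_nat (trunc_q q y N choose j) :: 'a) = of_nat (trunc_q q y j choose j)"
      using stable by simp
    then show "(trunc_q q y N choose j) mod CHAR('a) = (trunc_q q y j choose j) mod CHAR('a)"
      by (simp add: of_nat_eq_iff_cong_CHAR cong_def)
  qed
  moreover have "(of_nat (n mod CHAR('a)) :: 'a) = of_nat n" for n
    by (simp add: of_nat_eq_iff_cong_CHAR cong_def)
  ultimately show ?thesis
    using stable[of j] by simp
qed

lemma nat_to_Zp_sum_digits:
  assumes "q > 0" and "\<forall>i. D i < q"
  shows "nat_to_Zp q (\<Sum>i<M. D i * q ^ i) k = (if k < M then D k else 0)"
  using assms(2)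
proof (induction M arbitrary: D k)
  case 0
  then show ?case by (simp add: nat_to_Zp_def)
next
  case (Suc M)
  have split: "(\<Sum>i<Suc M. D i * q ^ i) = D 0 + q * (\<Sum>i<M. D (Suc i) * q ^ i)"
    unfolding sum.lessThan_Suc_shift by (simp add: sum_distrib_left mult_ac)
  show ?case
  proof (cases k)
    case 0
    then show ?thesis using Suc.prems assms(1) unfolding split by (simp add: nat_to_Zp_def)
  next
    case (Suc k')
    have "nat_to_Zp q (D 0 + q * (\<Sum>i<M. D (Suc i) * q ^ i)) (Suc k')
        = nat_to_Zp q (\<Sum>i<M. D (Suc i) * q ^ i) k'"
      using Suc.prems assms(1) by (simp add: nat_to_Zp_def div_mult2_eq)
    then show ?thesis using Suc.IH[of "D \<circ> Suc" k'] Suc.prems \<open>k = Suc k'\<close>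
      unfolding split by simp
  qed
qed

lemma nat_to_Zp_rho_star_nat:
  assumes "q \<ge> 2" and "bij \<rho>"
  shows "nat_to_Zp q (rho_star_nat q \<rho> n) = rho_star \<rho> (nat_to_Zp q n)"
proof
  fix k
  have inj: "inj \<rho>" using assms(2) bij_is_inj by blast
  define A where "A = \<rho> ` {..n}"
  define M where "M = Suc (Max A)"
  define D where "D i = (if i \<in> A then nat_to_Zp q n (inv \<rho> i) else 0)" for i
  have "A \<subseteq> {..<M}" by (auto simp: A_def M_def less_Suc_eq_le)
  have "rho_star_nat q \<rho> n = (\<Sum>i\<le>n. D (\<rho> i) * q ^ \<rho> i)"
    unfolding rho_star_nat_def by (intro sum.cong refl) (simp add: D_def A_def inj nat_to_Zp_def)
  also have "\<dots> = (\<Sum>i\<in>A. D i * q ^ i)"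
    unfolding A_def using inj by (simp add: sum.reindex inj_on_subset)
  also have "\<dots> = (\<Sum>i<M. D i * q ^ i)"
    using \<open>A \<subseteq> {..<M}\<close> by (intro sum.mono_neutral_left) (auto simp: D_def)
  finally have "nat_to_Zp q (rho_star_nat q \<rho> n) k = (if k < M then D k else 0)"
    using nat_to_Zp_sum_digits[of q D M k] assms(1) by (simp add: D_def nat_to_Zp_def)
  also have "\<dots> = nat_to_Zp q n (inv \<rho> k)"
  proof (cases "k \<in> A")
    case False
    have "k = \<rho> (inv \<rho> k)" using assms(2) by (simp add: bij_is_surj surj_f_inv_f)
    then have "n < inv \<rho> k"
      using False by (metis A_def atMost_iff image_eqI not_less)
    then show ?thesis using False div_power_eq_0[OF assms(1), of n "inv \<rho> k"]
      by (simp add: D_def nat_to_Zp_def)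
  qed (use \<open>A \<subseteq> {..<M}\<close> in \<open>auto simp: D_def\<close>)
  finally show "nat_to_Zp q (rho_star_nat q \<rho> n) k = rho_star \<rho> (nat_to_Zp q n) k"
    by (simp add: rho_star_def)
qed

lemma of_nat_binom_Zp_rho_star_nat:
  assumes "prime CHAR('a::comm_ring_1)" and "q = CHAR('a) ^ m" and "m \<ge> 1"
    and "bij \<rho>" and "y \<in> Zp q"
  shows "(of_nat (binom_Zp CHAR('a) q y (rho_star_nat q \<rho> j)) :: 'a)
       = of_nat (binom_Zp CHAR('a) q (rho_star (inv \<rho>) y) j)"
proof -
  have "q \<ge> 2"
    using assms(1-3) prime_ge_2_nat[of "CHAR('a)"] self_le_power[of "CHAR('a)" m] by simp
  have inj: "inj \<rho>" using assms(4) bij_is_inj by blast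
  define S where "S = {k. nat_to_Zp q j k \<noteq> 0}"
  have z: "rho_star (inv \<rho>) y = y \<circ> \<rho>"
    using assms(4) by (simp add: rho_star_def inv_inv_eq)
  have digits: "nat_to_Zp q (rho_star_nat q \<rho> j) (\<rho> k) = nat_to_Zp q j k" for k
    using nat_to_Zp_rho_star_nat[OF \<open>q \<ge> 2\<close> assms(4)] inj by (simp add: rho_star_def)
  have support: "{i. nat_to_Zp q (rho_star_nat q \<rho> j) i \<noteq> 0} = \<rho> ` S"
    using digits bij_iff[of \<rho>] assms(4) unfolding S_def by (auto simp: image_iff) metis
  have "y \<circ> \<rho> \<in> Zp q" using assms(5) by (simp add: Zp_def)
  have "(of_nat (binom_Zp CHAR('a) q y (rho_star_nat q \<rho> j)) :: 'a)
      = (\<Prod>i\<in>\<rho> ` S. of_nat (y i choose nat_to_Zp q (rho_star_nat q \<rho> j) i))"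
    unfolding of_nat_binom_Zp[OF assms(1-3,5)] support ..
  also have "\<dots> = (\<Prod>k\<in>S. of_nat ((y \<circ> \<rho>) k choose nat_to_Zp q j k))"
    by (simp add: prod.reindex inj_on_subset[OF inj] digits)
  also have "\<dots> = of_nat (binom_Zp CHAR('a) q (rho_star (inv \<rho>) y) j)"
    unfolding z of_nat_binom_Zp[OF assms(1-3) \<open>y \<circ> \<rho> \<in> Zp q\<close>] S_def ..
  finally show ?thesis .
qed

theorem corollary7p4:
  fixes p m0 q :: nat
    and \<rho> :: "nat \<Rightarrow> nat"
    and f :: "(nat \<Rightarrow> nat) \<Rightarrow> 'k::{field, finite} fps"
    and c :: "nat \<Rightarrow> 'k fps"
  assumes "prime p" and "m0 \<ge> 1" and "q = p ^ m0"
    and "CHAR('k) = p" and "\<exists>e\<ge>1. CARD('k) = q ^ e"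
    and "bij \<rho>"
    and "Zp_continuous q f"
    and "c \<longlonglongrightarrow> 0"
    and "\<forall>y\<in>Zp q. (\<lambda>j. c j * of_nat (binom_Zp p q y j)) sums f y"
  shows "\<forall>y\<in>Zp q.
     (\<lambda>j. c j * of_nat (binom_Zp p q y (rho_star_nat q \<rho> j))) sums f (rho_star (inv \<rho>) y)"
proof
  fix y assume "y \<in> Zp q"
  have "rho_star (inv \<rho>) y \<in> Zp q"
    using \<open>y \<in> Zp q\<close> by (simp add: Zp_def rho_star_def)
  moreover have "(of_nat (binom_Zp p q y (rho_star_nat q \<rho> j)) :: 'k fps)
      = of_nat (binom_Zp p q (rho_star (inv \<rho>) y) j)" for j
    using of_nat_binom_Zp_rho_star_nat[where 'a="'k fps", of q m0 \<rho> y j] assms(1-3,6) \<open>y \<in> Zp q\<close>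
    by (simp add: assms(4))
  ultimately show "(\<lambda>j. c j * of_nat (binom_Zp p q y (rho_star_nat q \<rho> j))) sums f (rho_star (inv \<rho>) y)"
    using assms(9) by simp
qed

end
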